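(* For every integer $n\geq 0$, \[ \overline{C}(0,3,3n+2)=\overline{C}(1,3,3n+2)=\overline{C}(2,3,3n+2)=\frac{\overline{a}(3n+2)}{3}\equiv 0\pmod 2 . \]
   Context: An overpartition is a partition in which the first occurrence of each distinct part size may be overlined; $\ell(\pi)$ counts all parts (overlined and non-overlined). An overcubic partition of $n$ is a pair $(\pi_r,\pi_b)$ of overpartitions, with $\pi_b$ having only even parts, and total sum of parts $n$; $\overline{a}(n)$ denotes their number, so $\sum_n \overline{a}(n)q^n=\prod_{k\ge1}\frac{(1+q^k)(1+q^{2k})}{(1-q^k)(1-q^{2k})}$. The crank of such a pair is $r_c=\ell(\pi_r^{e})-\ell(\pi_b)$, where $\pi_r^{e}$ consists of the even parts of $\pi_r$. $\overline{C}(i,3,n)$ denotes the number of overcubic partitions of $n$ with $r_c\equiv i\pmod 3$. *)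

theory Defs
  imports Main "HOL-Library.Multiset" "HOL-Number_Theory.Cong"
begin

text \<open>An overpartition of m is represented as a pair (P, O): P is the multiset
of all parts (positive integers summing to m), and O is the set of part sizes
whose first occurrence is overlined (O must be a subset of the distinct part sizes).\<close>

type_synonym overpartition = "nat multiset \<times> nat set"

definition is_overpartition :: "nat \<Rightarrow> overpartition \<Rightarrow> bool" where
  "is_overpartition m p \<longleftrightarrow>
     (\<forall>x\<in>#fst p. 0 < x) \<and> sum_mset (fst p) = m \<and> snd p \<subseteq> set_mset (fst p)"

definition opt_len :: "overpartition \<Rightarrow> nat" where
  "opt_len p = size (fst p)"

definition even_parts :: "overpartition \<Rightarrow> overpartition" where
  "even_parts p = (filter_mset even (fst p), {x \<in> snd p. even x})"

definition overcubic :: "nat \<Rightarrow> (overpartition \<times> overpartition) set" where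
  "overcubic n = {(pr, pb). \<exists>a b. a + b = n \<and> is_overpartition a pr \<and> is_overpartition b pb
                                \<and> (\<forall>x\<in>#fst pb. even x)}"

definition abar :: "nat \<Rightarrow> nat" where
  "abar n = card (overcubic n)"

definition crank :: "overpartition \<times> overpartition \<Rightarrow> int" where
  "crank x = int (opt_len (even_parts (fst x))) - int (opt_len (snd x))"

definition Cbar :: "int \<Rightarrow> nat \<Rightarrow> nat \<Rightarrow> nat" where
  "Cbar i k n = card {x \<in> overcubic n. [crank x = i] (mod int k)}"

end

(*
  Weight each overcubic partition by omega ^ crank, omega a primitive cube root of unity.
  The weighted generating function is a product of elementary factors; for an even part size
  2j the red and blue factors combine to (1 + omega x)(1 + omega^2 x) / ((1 - omega x)(1 - omega^2 x))
  = (1 - x)(1 + x^3) / ((1 + x)(1 - x^3)) with x = q^(2j). Multiplied by prod (1 - q^(6j)), the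
  generating function becomes prod (1 + q^(2j-1))^2 (1 - q^(2j)) times a series in q^3, and by
  Jacobi's triple product the first factor is sum_k q^(k^2). No square is 2 mod 3, so the
  coefficient of q^(3n+2) vanishes: C0 + C1 omega + C2 omega^2 = 0, whence C0 = C1 = C2.
  Everything is done with finite products and truncated series, via a finite form of the triple
  product in terms of Gaussian binomials. Finally, toggling the overline of the largest part is a
  fixed-point-free involution preserving the crank, so each count is even.
*)

theory Submission
  imports Defs "HOL-Computational_Algebra.Formal_Power_Series"
begin

unbundle fps_syntax

section \<open>Gaussian binomials and a finite Jacobi triple product\<close>

fun qbinom :: "'a::comm_ring_1 \<Rightarrow> nat \<Rightarrow> nat \<Rightarrow> 'a" where
  "qbinom q n 0 = 1"
| "qbinom q 0 (Suc k) = 0"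
| "qbinom q (Suc n) (Suc k) = qbinom q n k + q ^ Suc k * qbinom q n (Suc k)"

definition qpoch :: "'a::comm_ring_1 \<Rightarrow> nat \<Rightarrow> 'a" where
  "qpoch q m = (\<Prod>j=1..m. 1 - q ^ j)"

lemma qpoch_0 [simp]: "qpoch q 0 = 1"
  by (simp add: qpoch_def)

lemma qpoch_Suc [simp]: "qpoch q (Suc m) = qpoch q m * (1 - q ^ Suc m)"
  by (simp add: qpoch_def)

lemma qbinom_eq_0: "n < k \<Longrightarrow> qbinom q n k = 0"
proof (induction n arbitrary: k)
  case 0 then show ?case by (cases k) auto
next
  case (Suc n) then show ?case by (cases k) auto
qed

lemma qbinom_qpoch: "k \<le> n \<Longrightarrow> qbinom q n k * qpoch q k * qpoch q (n - k) = qpoch q n"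
proof (induction n arbitrary: k)
  case 0 then show ?case by simp
next
  case (Suc n)
  show ?case
  proof (cases k)
    case 0 then show ?thesis by simp
  next
    case k: (Suc k')
    have IH1: "qbinom q n k' * qpoch q k' * qpoch q (n - k') = qpoch q n"
      using Suc.IH Suc.prems k by simp
    show ?thesis
    proof (cases "k' = n")
      case True
      then have "qbinom q (Suc n) k * qpoch q k * qpoch q (Suc n - k)
          = (qbinom q n k' * qpoch q k' * qpoch q (n - k')) * (1 - q ^ Suc k')"
        using k by (simp add: qbinom_eq_0 algebra_simps)
      then show ?thesis using IH1 True k by simp
    next
      case False
      then have k_le: "Suc k' \<le> n" using Suc.prems k by simp
      have IH2: "qbinom q n (Suc k') * qpoch q (Suc k') * qpoch q (n - Suc k') = qpoch q n"
        using Suc.IH[OF k_le] .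
      have nk: "n - k' = Suc (n - Suc k')" using k_le by simp
      have e: "q ^ Suc k' * q ^ (n - k') = q ^ Suc n"
        using k_le by (metis Suc_leD le_add_diff_inverse add_Suc power_add)
      have "qbinom q (Suc n) k * qpoch q k * qpoch q (Suc n - k)
          = qbinom q n k' * qpoch q k' * qpoch q (n - k') * (1 - q ^ Suc k')
            + q ^ Suc k' * (qbinom q n (Suc k') * qpoch q (Suc k') * qpoch q (n - Suc k')) * (1 - q ^ (n - k'))"
        using k nk by (simp add: algebra_simps)
      also have "\<dots> = qpoch q n * (1 - q ^ Suc k' * q ^ (n - k'))"
        unfolding IH1 IH2 by (simp add: algebra_simps)
      finally show ?thesis using e by simp
    qed
  qed
qed

lemma qbinom_Suc_Suc': "qbinom q (Suc n) (Suc k) = q ^ (n - k) * qbinom q n k + qbinom q n (Suc k)"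
proof (induction n arbitrary: k)
  case 0 then show ?case by (cases k) auto
next
  case (Suc n)
  show ?case
  proof (cases k)
    case 0 then show ?thesis using Suc.IH[of 0] by (simp add: algebra_simps)
  next
    case k: (Suc k')
    have e: "q ^ Suc k * q ^ (n - k) * qbinom q n k = q ^ (Suc n - k) * q ^ k * qbinom q n k"
    proof (cases "k \<le> n")
      case True
      then have "Suc k + (n - k) = (Suc n - k) + k" by simp
      then show ?thesis by (metis power_add)
    qed (simp add: qbinom_eq_0)
    have "qbinom q (Suc (Suc n)) (Suc k) = qbinom q (Suc n) (Suc k') + q ^ Suc k * qbinom q (Suc n) (Suc k)"
      using k by simp
    also have "\<dots> = q ^ (n - k') * qbinom q n k' + qbinom q n k
        + q ^ Suc k * (q ^ (n - k) * qbinom q n k + qbinom q n (Suc k))"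
      using k by (simp only: Suc.IH)
    also have "\<dots> = q ^ (Suc n - k) * (qbinom q n k' + q ^ k * qbinom q n k)
        + (qbinom q n k + q ^ Suc k * qbinom q n (Suc k))"
      using k e by (simp add: algebra_simps)
    also have "\<dots> = q ^ (Suc n - k) * qbinom q (Suc n) k + qbinom q (Suc n) (Suc k)"
      using k by simp
    finally show ?thesis .
  qed
qed

definition qbinom_int :: "'a::comm_ring_1 \<Rightarrow> nat \<Rightarrow> int \<Rightarrow> 'a" where
  "qbinom_int q n m = (if m < 0 then 0 else qbinom q n (nat m))"

lemma qbinom_int_nonzeroD: "qbinom_int q n m \<noteq> 0 \<Longrightarrow> 0 \<le> m \<and> m \<le> int n"
  unfolding qbinom_int_def by (metis qbinom_eq_0 linorder_not_less nat_le_iff)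

lemma qbinom_int_Suc_Suc:
  "qbinom_int q (Suc (Suc n)) (m + 1) = (1 + q ^ Suc n) * qbinom_int q n m
     + q ^ nat (int n + 1 - m) * qbinom_int q n (m - 1) + q ^ nat (m + 1) * qbinom_int q n (m + 1)"
proof (cases "m < 0")
  case True
  then show ?thesis by (cases "m = -1") (auto simp: qbinom_int_def)
next
  case False
  then obtain j where m: "m = int j" by (metis nonneg_int_cases not_le)
  have pascal: "qbinom q (Suc n) j = (if j = 0 then 0 else q ^ (Suc n - j) * qbinom q n (j - 1)) + qbinom q n j"
    by (cases j) (simp_all add: qbinom_Suc_Suc' del: qbinom.simps(3))
  have top: "q ^ Suc j * (q ^ (n - j) * qbinom q n j) = q ^ Suc n * qbinom q n j"
  proof (cases "j \<le> n")
    case True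
    then have "Suc j + (n - j) = Suc n" by simp
    then show ?thesis by (metis mult.assoc power_add)
  qed (simp add: qbinom_eq_0)
  have "qbinom q (Suc (Suc n)) (Suc j)
      = qbinom q (Suc n) j + q ^ Suc j * (q ^ (n - j) * qbinom q n j + qbinom q n (Suc j))"
    by (simp only: qbinom.simps(3)[of q "Suc n" j] qbinom_Suc_Suc'[of q n j])
  also have "\<dots> = (1 + q ^ Suc n) * qbinom q n j
      + (if j = 0 then 0 else q ^ (Suc n - j) * qbinom q n (j - 1)) + q ^ Suc j * qbinom q n (Suc j)"
    unfolding pascal using top by (simp add: algebra_simps)
  finally show ?thesis
    using m by (auto simp: qbinom_int_def nat_add_distrib of_nat_diff nat_diff_distrib')
qed

definition jtp_term :: "'a::comm_ring_1 \<Rightarrow> nat \<Rightarrow> int \<Rightarrow> 'a" where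
  "jtp_term q N k = q ^ nat (k * k) * qbinom_int (q\<^sup>2) (2 * N) (int N + k)"

lemma power_mult_cong:
  fixes q x :: "'a::semiring_1"
  shows "(x \<noteq> 0 \<Longrightarrow> a = b) \<Longrightarrow> q ^ a * x = q ^ b * x"
  by (cases "x = 0") auto

lemma square_exponent_pred:
  "k \<le> int N + 1 \<Longrightarrow> nat (k * k) + 2 * nat (int N + 1 - k) = 2 * N + 1 + nat ((k - 1) * (k - 1))"
proof -
  assume "k \<le> int N + 1"
  moreover have "(k - 1) * (k - 1) = k * k - 2 * k + 1" by (simp add: algebra_simps)
  moreover have "0 \<le> k * k" "0 \<le> (k - 1) * (k - 1)" by simp_all
  ultimately show ?thesis by arith
qed

lemma square_exponent_succ:
  "0 \<le> int N + k + 1 \<Longrightarrow> nat (k * k) + 2 * nat (int N + k + 1) = 2 * N + 1 + nat ((k + 1) * (k + 1))"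
proof -
  assume "0 \<le> int N + k + 1"
  moreover have "(k + 1) * (k + 1) = k * k + 2 * k + 1" by (simp add: algebra_simps)
  moreover have "0 \<le> k * k" "0 \<le> (k + 1) * (k + 1)" by simp_all
  ultimately show ?thesis by arith
qed

lemma jtp_term_Suc:
  "jtp_term q (Suc N) k = (1 + q ^ (2 * (2 * N + 1))) * jtp_term q N k
     + q ^ (2 * N + 1) * (jtp_term q N (k - 1) + jtp_term q N (k + 1))"
proof -
  let ?z = "qbinom_int (q\<^sup>2) (2 * N)"
  have "jtp_term q (Suc N) k = q ^ nat (k * k) * qbinom_int (q\<^sup>2) (Suc (Suc (2 * N))) ((int N + k) + 1)"
    by (simp add: jtp_term_def add_ac)
  also have "\<dots> = (1 + q ^ (2 * (2 * N + 1))) * jtp_term q N k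
      + q ^ (nat (k * k) + 2 * nat (int N + 1 - k)) * ?z (int N + (k - 1))
      + q ^ (nat (k * k) + 2 * nat (int N + k + 1)) * ?z (int N + (k + 1))"
    unfolding qbinom_int_Suc_Suc jtp_term_def power_add power_mult[symmetric]
    by (simp add: algebra_simps)
  also have "q ^ (nat (k * k) + 2 * nat (int N + 1 - k)) * ?z (int N + (k - 1))
      = q ^ (2 * N + 1 + nat ((k - 1) * (k - 1))) * ?z (int N + (k - 1))"
    by (rule power_mult_cong, rule square_exponent_pred) (auto dest: qbinom_int_nonzeroD)
  also have "q ^ (nat (k * k) + 2 * nat (int N + k + 1)) * ?z (int N + (k + 1))
      = q ^ (2 * N + 1 + nat ((k + 1) * (k + 1))) * ?z (int N + (k + 1))"
    by (rule power_mult_cong, rule square_exponent_succ) (auto dest: qbinom_int_nonzeroD)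
  finally show ?thesis
    by (simp add: jtp_term_def power_add algebra_simps)
qed

lemma jtp_term_eq_0: "int N < \<bar>k\<bar> \<Longrightarrow> jtp_term q N k = 0"
  unfolding jtp_term_def qbinom_int_def by (auto simp: qbinom_eq_0)

lemma sum_shift_int: "(\<Sum>k=a..b. f (k + s)) = (\<Sum>k=a+s..b+s. f k)" for a b s :: int
  by (rule sum.reindex_bij_witness[of _ "\<lambda>k. k - s" "\<lambda>k. k + s"]) auto

lemma sum_jtp_term_shift:
  "\<bar>s\<bar> \<le> M - int N \<Longrightarrow> (\<Sum>k=-M..M. jtp_term q N (k + s)) = (\<Sum>k=-int N..int N. jtp_term q N k)"
  unfolding sum_shift_int by (rule sum.mono_neutral_right) (auto intro!: jtp_term_eq_0)

theorem finite_jacobi_triple_product: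
  "(\<Sum>k=-int N..int N. jtp_term q N k) = (\<Prod>j=1..N. (1 + q ^ (2 * j - 1))\<^sup>2)"
proof (induction N)
  case 0
  show ?case by (simp add: jtp_term_def qbinom_int_def)
next
  case (Suc N)
  let ?S = "\<Sum>k=-int N..int N. jtp_term q N k"
  have shifted: "(\<Sum>k=-int (Suc N)..int (Suc N). jtp_term q N (k + s)) = ?S" if "\<bar>s\<bar> \<le> 1" for s
    using that by (intro sum_jtp_term_shift) simp
  have "(\<Sum>k=-int (Suc N)..int (Suc N). jtp_term q (Suc N) k)
      = (1 + q ^ (2 * (2 * N + 1))) * ?S + q ^ (2 * N + 1) * (?S + ?S)"
    unfolding jtp_term_Suc sum.distrib sum_distrib_left[symmetric]
    using shifted[of 0] shifted[of "-1"] shifted[of 1] by simp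
  also have "\<dots> = ?S * (1 + q ^ (2 * Suc N - 1))\<^sup>2"
    by (simp add: power2_eq_square algebra_simps flip: power_add)
  finally show ?case
    by (simp add: Suc.IH)
qed

section \<open>Truncated power series and the triple product\<close>

lemma fps_prod_nth_0: "(\<Prod>i\<in>A. f i) $ 0 = (\<Prod>i\<in>A. f i $ 0)"
  by (induction A rule: infinite_finite_induct) simp_all

lemma fps_cutoff_mult_cong:
  "fps_cutoff n f = fps_cutoff n f' \<Longrightarrow> fps_cutoff n g = fps_cutoff n g'
    \<Longrightarrow> fps_cutoff n (f * g) = fps_cutoff n (f' * g')"
  by (simp add: fps_cutoff_eq_fps_cutoff_iff fps_mult_nth)

lemma fps_cutoff_mult_right_cancel:
  fixes p :: "'a::field fps"
  assumes "fps_cutoff n (f * p) = fps_cutoff n (g * p)" and "p $ 0 \<noteq> 0"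
  shows "fps_cutoff n f = fps_cutoff n g"
proof -
  have "fps_cutoff n (f * p * inverse p) = fps_cutoff n (g * p * inverse p)"
    using assms(1) by (rule fps_cutoff_mult_cong) simp
  moreover have "p * inverse p = 1"
    using assms(2) by (rule inverse_mult_eq_1')
  ultimately show ?thesis
    by (simp add: mult.assoc)
qed

lemma fps_cutoff_mult_one_minus_X_power:
  fixes f :: "'a::comm_ring_1 fps"
  shows "n \<le> j \<Longrightarrow> fps_cutoff n (f * (1 - fps_X ^ j)) = fps_cutoff n f"
  by (auto simp: fps_cutoff_eq_fps_cutoff_iff right_diff_distrib fps_X_power_mult_right_nth)

lemma fps_cutoff_qpoch:
  fixes d :: nat and Q :: "'a::comm_ring_1 fps"
  defines "Q \<equiv> fps_X ^ d"
  shows "r \<le> m \<Longrightarrow> fps_cutoff (d * (r + 1)) (qpoch Q m) = fps_cutoff (d * (r + 1)) (qpoch Q r)"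
proof (induction m)
  case (Suc m)
  show ?case
  proof (cases "r = Suc m")
    case False
    have "qpoch Q (Suc m) = qpoch Q m * (1 - fps_X ^ (d * Suc m))"
      by (simp add: Q_def power_add power_mult)
    also have "fps_cutoff (d * (r + 1)) \<dots> = fps_cutoff (d * (r + 1)) (qpoch Q m)"
      using Suc.prems False by (intro fps_cutoff_mult_one_minus_X_power) simp
    finally show ?thesis
      using Suc.IH Suc.prems False by simp
  qed simp
qed simp

lemma qpoch_X_power_nth_0 [simp]: "0 < d \<Longrightarrow> qpoch (fps_X ^ d) m $ 0 = (1 :: 'a::comm_ring_1)"
  by (induction m) simp_all

lemma fps_cutoff_qbinom_qpoch:
  fixes d n i M :: nat
  assumes "i \<le> n" and "min i (n - i) \<le> M" and "0 < d"
  shows "fps_cutoff (d * (min i (n - i) + 1)) (qbinom (fps_X ^ d) n i * qpoch (fps_X ^ d) M)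
       = fps_cutoff (d * (min i (n - i) + 1)) (1 :: 'a::field fps)"
proof -
  define r where "r = min i (n - i)"
  let ?c = "fps_cutoff (d * (r + 1)) :: 'a fps \<Rightarrow> 'a fps" and ?p = "qpoch (fps_X ^ d) :: nat \<Rightarrow> 'a fps"
  define h where "h = qbinom (fps_X ^ d) n i * ?p M"
  have cut: "?c (?p j) = ?c (?p r)" if "r \<le> j" for j
    using that by (rule fps_cutoff_qpoch)
  have "?c (h * (?p r * ?p r)) = ?c (h * (?p i * ?p (n - i)))"
    using cut[of i] cut[of "n - i"] unfolding r_def by (auto intro!: fps_cutoff_mult_cong)
  also have "h * (?p i * ?p (n - i)) = (qbinom (fps_X ^ d) n i * ?p i * ?p (n - i)) * ?p M"
    unfolding h_def by (simp only: mult_ac)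
  also have "\<dots> = ?p n * ?p M"
    by (simp only: qbinom_qpoch[OF assms(1)])
  also have "?c \<dots> = ?c (1 * (?p r * ?p r))"
    using fps_cutoff_mult_cong[OF cut[of n] cut[of M]] assms unfolding r_def by simp
  finally show ?thesis
    unfolding h_def r_def by (rule fps_cutoff_mult_right_cancel) (simp add: assms(3))
qed

lemma square_gap_less:
  fixes k :: int
  assumes "int m \<le> 2 * int N"
  shows "int m - k * k < 2 * (int N - \<bar>k\<bar> + 1)"
proof -
  have "0 \<le> (\<bar>k\<bar> - 1) * (\<bar>k\<bar> - 1)"
    by simp
  then have "2 * \<bar>k\<bar> \<le> k * k + 1"
    by (simp add: algebra_simps abs_mult_self_eq)
  with assms show ?thesis
    by (smt (verit))
qed

text \<open>In degrees up to \<open>2 * N\<close>, multiplying the finite identity by \<open>qpoch (q\<^sup>2) N\<close> yields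
  Jacobi's \<open>\<Sum>k. q ^ (k * k) = (\<Prod>j. (1 - q ^ (2 * j)) * (1 + q ^ (2 * j - 1))\<^sup>2)\<close>.\<close>

lemma jtp_term_qpoch_nth:
  assumes m: "m \<le> 2 * N" and k: "\<bar>k\<bar> \<le> int N"
  shows "(jtp_term fps_X N k * qpoch (fps_X\<^sup>2) N) $ m = (if int m = k * k then 1 else 0 :: 'a::field)"
proof -
  define i where "i = nat (int N + k)"
  define r where "r = min i (2 * N - i)"
  have i: "i \<le> 2 * N" "int i = int N + k"
    unfolding i_def using k by auto
  have r: "int r = int N - \<bar>k\<bar>" "r \<le> N"
    unfolding r_def using i by (auto simp: min_def of_nat_diff abs_if)
  have prod: "jtp_term fps_X N k * qpoch (fps_X\<^sup>2) N
      = fps_X ^ nat (k * k) * (qbinom (fps_X ^ 2) (2 * N) i * qpoch (fps_X ^ 2) N :: 'a fps)"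
    using k unfolding jtp_term_def qbinom_int_def i_def by (simp add: mult.assoc)
  show ?thesis
  proof (cases "m < nat (k * k)")
    case True
    then show ?thesis unfolding prod fps_X_power_mult_nth by auto
  next
    case False
    have "int m - k * k < 2 * (int r + 1)"
      using square_gap_less[of m N k] m r(1) by simp
    moreover have "int (m - nat (k * k)) = int m - k * k"
      using False by (simp add: of_nat_diff)
    ultimately have "int (m - nat (k * k)) < int (2 * (r + 1))"
      by simp
    then have "m - nat (k * k) < 2 * (r + 1)"
      by (simp only: of_nat_less_iff)
    moreover have "fps_cutoff (2 * (r + 1)) (qbinom (fps_X ^ 2) (2 * N) i * qpoch (fps_X ^ 2) N)
        = fps_cutoff (2 * (r + 1)) (1 :: 'a fps)"
      unfolding r_def using i(1) r(2)[unfolded r_def] by (rule fps_cutoff_qbinom_qpoch) simp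
    ultimately have "(qbinom (fps_X ^ 2) (2 * N) i * qpoch (fps_X ^ 2) N) $ (m - nat (k * k))
        = (1 :: 'a fps) $ (m - nat (k * k))"
      unfolding fps_cutoff_eq_fps_cutoff_iff by blast
    then show ?thesis
      unfolding prod fps_X_power_mult_nth using False by auto
  qed
qed

lemma square_mod_3_neq_2: "(k * k) mod 3 \<noteq> (2 :: int)"
proof -
  have "(k * k) mod 3 = ((k mod 3) * (k mod 3)) mod 3"
    by (simp add: mod_mult_eq)
  moreover have "k mod 3 \<in> {0, 1, 2}"
    by auto
  ultimately show ?thesis
    by auto
qed

lemma jacobi_product_qpoch_nth_nonsquare:
  assumes "m \<le> 2 * N" and "\<forall>k. int m \<noteq> k * k"
  shows "((\<Prod>j=1..N. (1 + fps_X ^ (2 * j - 1))\<^sup>2) * qpoch (fps_X\<^sup>2) N) $ m = (0 :: 'a::field)"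
proof -
  have "((\<Prod>j=1..N. (1 + fps_X ^ (2 * j - 1))\<^sup>2) * qpoch (fps_X\<^sup>2) N) $ m
      = (\<Sum>k=-int N..int N. (jtp_term fps_X N k * qpoch (fps_X\<^sup>2) N) $ m :: 'a)"
    unfolding finite_jacobi_triple_product[symmetric] by (simp add: sum_distrib_right fps_sum_nth)
  also have "\<dots> = 0"
    using assms by (intro sum.neutral) (auto simp: jtp_term_qpoch_nth)
  finally show ?thesis .
qed

definition fps_in_X_power :: "nat \<Rightarrow> 'a::zero fps \<Rightarrow> bool" where
  "fps_in_X_power d f \<longleftrightarrow> (\<forall>n. \<not> d dvd n \<longrightarrow> f $ n = 0)"

lemma fps_in_X_power_mult:
  assumes "fps_in_X_power d f" and "fps_in_X_power d g"
  shows "fps_in_X_power d (f * g :: 'a::comm_semiring_0 fps)"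
  unfolding fps_in_X_power_def fps_mult_nth
proof (intro allI impI sum.neutral ballI)
  fix n i assume n: "\<not> d dvd n" and i: "i \<in> {0..n}"
  have "n = i + (n - i)"
    using i by simp
  then have "\<not> d dvd i \<or> \<not> d dvd (n - i)"
    using n by (metis dvd_add)
  then show "f $ i * g $ (n - i) = 0"
    using assms by (auto simp: fps_in_X_power_def)
qed

lemma fps_in_X_power_prod:
  "(\<And>j. j \<in> A \<Longrightarrow> fps_in_X_power d (f j)) \<Longrightarrow> fps_in_X_power d (\<Prod>j\<in>A. f j :: 'a::comm_semiring_1 fps)"
  by (induction A rule: infinite_finite_induct)
     (auto simp: fps_in_X_power_mult, auto simp: fps_in_X_power_def)

lemma fps_in_X_power_one_plus_minus:
  assumes "d dvd n"
  shows "fps_in_X_power d (1 + fps_X ^ n :: 'a::comm_ring_1 fps)" and "fps_in_X_power d (1 - fps_X ^ n :: 'a fps)"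
  using assms by (auto simp: fps_in_X_power_def)

lemma fps_mult_nth_residue_eq_0:
  fixes f g :: "'a::comm_semiring_0 fps"
  assumes g: "fps_in_X_power d g" and f: "\<And>l. l \<le> m \<Longrightarrow> l mod d = r \<Longrightarrow> f $ l = 0"
    and "i \<le> m" and "i mod d = r"
  shows "(f * g) $ i = 0"
  unfolding fps_mult_nth
proof (intro sum.neutral ballI)
  fix l assume l: "l \<in> {0..i}"
  show "f $ l * g $ (i - l) = 0"
  proof (cases "d dvd (i - l)")
    case True
    then have "l mod d = r" using l assms(4) mod_eq_dvd_iff_nat[of l i d] by simp
    then show ?thesis using f l assms(3) by simp
  next
    case False then show ?thesis using g by (simp add: fps_in_X_power_def)
  qed
qed

lemma fps_mult_nth_residue_eq_0_cancel:
  fixes f g :: "'a::idom fps"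
  assumes g: "fps_in_X_power d g" "g $ 0 \<noteq> 0"
    and fg: "\<And>l. l \<le> m \<Longrightarrow> l mod d = r \<Longrightarrow> (f * g) $ l = 0"
  shows "i \<le> m \<Longrightarrow> i mod d = r \<Longrightarrow> f $ i = 0"
proof (induction i rule: less_induct)
  case (less i)
  have "(f * g) $ i = f $ i * g $ 0 + (\<Sum>l<i. f $ l * g $ (i - l))"
    by (simp add: fps_mult_nth atLeast0AtMost lessThan_Suc_atMost[symmetric] add.commute)
  also have "(\<Sum>l<i. f $ l * g $ (i - l)) = 0"
  proof (intro sum.neutral ballI)
    fix l assume l: "l \<in> {..<i}"
    show "f $ l * g $ (i - l) = 0"
    proof (cases "d dvd (i - l)")
      case True
      then have "l mod d = r" using l less.prems mod_eq_dvd_iff_nat[of l i d] by simp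
      then show ?thesis using less.IH l less.prems by simp
    next
      case False then show ?thesis using g by (simp add: fps_in_X_power_def)
    qed
  qed
  finally show ?case
    using fg[OF less.prems] g(2) by simp
qed

section \<open>The crank generating function at a cube root of unity\<close>

definition omega :: complex where
  "omega = Complex (-1/2) (sqrt 3 / 2)"

lemma omega_squared: "omega\<^sup>2 = Complex (-1/2) (- sqrt 3 / 2)"
  by (simp add: omega_def power2_eq_square complex_eq_iff)

lemma omega_cube: "omega ^ 3 = 1"
proof -
  have "omega ^ 3 = omega * omega\<^sup>2"
    by (simp add: power2_eq_square power3_eq_cube)
  also have "\<dots> = 1"
    unfolding omega_squared by (simp add: omega_def complex_eq_iff field_simps)
  finally show ?thesis .
qed

lemma omega_power_mod_3: "omega ^ n = omega ^ (n mod 3)"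
proof -
  have "omega ^ n = (omega ^ 3) ^ (n div 3) * omega ^ (n mod 3)"
    by (simp only: power_mult[symmetric] power_add[symmetric] mult_div_mod_eq)
  then show ?thesis
    by (simp add: omega_cube)
qed

lemma omega_combination_eq_0:
  fixes a b c :: real
  assumes "of_real a + of_real b * omega + of_real c * omega\<^sup>2 = 0"
  shows "a = b \<and> b = c"
proof -
  have "a - b / 2 - c / 2 = 0" "(b - c) * (sqrt 3 / 2) = 0"
    using arg_cong[OF assms[unfolded omega_squared], of Re] arg_cong[OF assms[unfolded omega_squared], of Im]
    by (simp_all add: omega_def algebra_simps)
  then show ?thesis by simp
qed

definition overpartition_series :: "'a::comm_ring_1 \<Rightarrow> nat \<Rightarrow> 'a fps" where
  "overpartition_series c k = Abs_fps (\<lambda>n. if n = 0 then 1 else if k dvd n then 2 * c ^ (n div k) else 0)"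

lemma overpartition_series_nth:
  "overpartition_series c k $ n = (if n = 0 then 1 else if k dvd n then 2 * c ^ (n div k) else 0)"
  by (simp add: overpartition_series_def)

lemma overpartition_series_mult:
  assumes k: "0 < k"
  shows "overpartition_series c k * (1 - fps_const c * fps_X ^ k) = 1 + fps_const c * fps_X ^ k"
proof (rule fps_ext)
  fix n
  let ?a = "overpartition_series c k"
  have lhs: "(?a * (1 - fps_const c * fps_X ^ k)) $ n = ?a $ n - (if n < k then 0 else c * ?a $ (n - k))"
    by (simp add: algebra_simps fps_X_power_mult_nth)
  consider "n < k" | "n = k" | "k < n" "k dvd n" | "k < n" "\<not> k dvd n"
    by linarith
  then show "(?a * (1 - fps_const c * fps_X ^ k)) $ n = (1 + fps_const c * fps_X ^ k) $ n"
  proof cases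
    case 1 then show ?thesis unfolding lhs using k by (auto simp: overpartition_series_nth dest: dvd_imp_le)
  next
    case 2 then show ?thesis unfolding lhs using k by (simp add: overpartition_series_nth)
  next
    case 3
    then obtain i where i: "n = k * i"
      by (auto elim: dvdE)
    with 3 have "i \<noteq> 0" "i \<noteq> 1"
      by auto
    then obtain j where j: "n = k * Suc (Suc j)"
      using i by (metis One_nat_def not0_implies_Suc)
    then have "n - k = k * Suc j"
      by simp
    then show ?thesis
      unfolding lhs using k j by (simp add: overpartition_series_nth)
  next
    case 4
    then have "\<not> k dvd (n - k)"
      by (metis dvd_add_left_iff dvd_refl le_add_diff_inverse2 less_imp_le)
    then show ?thesis unfolding lhs using 4 by (simp add: overpartition_series_nth)
  qed
qed

lemma cyclotomic3_factors:
  fixes s t x :: "'a::comm_ring_1"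
  assumes "s + t = -1" and "s * t = 1"
  shows "(1 - s * x) * (1 - t * x) = 1 + x + x * x" and "(1 + s * x) * (1 + t * x) = 1 - x + x * x"
proof -
  have "(1 - s * x) * (1 - t * x) = 1 - (s + t) * x + (s * t) * x * x"
    and "(1 + s * x) * (1 + t * x) = 1 + (s + t) * x + (s * t) * x * x"
    by (simp_all add: algebra_simps)
  then show "(1 - s * x) * (1 - t * x) = 1 + x + x * x" and "(1 + s * x) * (1 + t * x) = 1 - x + x * x"
    using assms by simp_all
qed

text \<open>The factors of the \<open>omega\<close>-weighted generating function for the part sizes \<open>2 * j - 1\<close>
  (red parts, weight 1) and \<open>2 * j\<close> (red parts with weight \<open>omega\<close>, blue parts with weight
  \<open>omega\<^sup>2\<close>).\<close>

definition overcubic_factor :: "nat \<Rightarrow> complex fps" where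
  "overcubic_factor j = overpartition_series 1 (2 * j - 1)
     * overpartition_series omega (2 * j) * overpartition_series (omega\<^sup>2) (2 * j)"

lemma overcubic_factor_identity:
  assumes j: "1 \<le> j"
  shows "overcubic_factor j * ((1 - fps_X ^ (2 * (2 * j - 1))) * (1 + fps_X ^ (2 * j)) * (1 - fps_X ^ (6 * j)))
       = (1 + fps_X ^ (2 * j - 1))\<^sup>2 * (1 - fps_X ^ (2 * j)) * (1 + fps_X ^ (6 * j))"
proof -
  define a where "a = (fps_X ^ (2 * j - 1) :: complex fps)"
  define x where "x = (fps_X ^ (2 * j) :: complex fps)"
  define s where "s = fps_const omega"
  define t where "t = fps_const (omega\<^sup>2)"
  have "omega + omega\<^sup>2 = -1"
    unfolding omega_squared by (simp add: omega_def complex_eq_iff)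
  moreover have "omega * omega\<^sup>2 = 1"
    using omega_cube by (simp add: power3_eq_cube power2_eq_square mult.assoc)
  moreover have "s + t = fps_const (omega + omega\<^sup>2)" "s * t = fps_const (omega * omega\<^sup>2)"
    unfolding s_def t_def by simp_all
  ultimately have st: "s + t = -1" "s * t = 1"
    by (simp_all flip: fps_const_neg)
  have a2: "fps_X ^ (2 * (2 * j - 1)) = a * a" and x3: "fps_X ^ (6 * j) = x * x * x"
    unfolding a_def x_def by (simp_all flip: power_add power_mult_distrib)
  have g1: "overpartition_series 1 (2 * j - 1) * (1 - a) = 1 + a"
    using overpartition_series_mult[of "2 * j - 1" 1] j unfolding a_def by simp
  have g2: "overpartition_series omega (2 * j) * (1 - s * x) = 1 + s * x"
    using overpartition_series_mult[of "2 * j" omega] j unfolding s_def x_def by simp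
  have g3: "overpartition_series (omega\<^sup>2) (2 * j) * (1 - t * x) = 1 + t * x"
    using overpartition_series_mult[of "2 * j" "omega\<^sup>2"] j unfolding t_def x_def by simp
  have "overcubic_factor j * ((1 - a * a) * (1 + x) * (1 - x * x * x))
      = (overpartition_series 1 (2 * j - 1) * (1 - a)) * (overpartition_series omega (2 * j) * (1 - s * x))
        * (overpartition_series (omega\<^sup>2) (2 * j) * (1 - t * x)) * ((1 + a) * (1 + x) * (1 - x))"
  proof -
    have "1 - x * x * x = (1 - x) * ((1 - s * x) * (1 - t * x))"
      unfolding cyclotomic3_factors(1)[OF st] by (simp add: algebra_simps)
    moreover have "1 - a * a = (1 - a) * (1 + a)"
      by (simp add: algebra_simps)
    ultimately show ?thesis
      unfolding overcubic_factor_def by (simp only: mult_ac)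
  qed
  also have "\<dots> = (1 + a) * (1 + a) * (1 - x) * ((1 + s * x) * (1 + t * x) * (1 + x))"
    unfolding g1 g2 g3 by (simp only: mult_ac)
  also have "\<dots> = (1 + a) * (1 + a) * (1 - x) * (1 + x * x * x)"
    unfolding cyclotomic3_factors(2)[OF st] by (simp add: algebra_simps)
  finally show ?thesis
    unfolding a2 x3 by (simp add: a_def x_def power2_eq_square)
qed

lemma qpoch_double:
  "(\<Prod>j=1..N. (1 - q ^ (2 * j - 1)) * (1 + q ^ j)) * qpoch q N = qpoch q (2 * N)"
proof (induction N)
  case (Suc N)
  have square: "(1 + q ^ Suc N) * (1 - q ^ Suc N) = 1 - q ^ Suc (Suc (2 * N))"
    by (simp add: algebra_simps flip: power_add mult_2)
  have "(\<Prod>j=1..Suc N. (1 - q ^ (2 * j - 1)) * (1 + q ^ j)) * qpoch q (Suc N)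
      = ((\<Prod>j=1..N. (1 - q ^ (2 * j - 1)) * (1 + q ^ j)) * qpoch q N)
        * (1 - q ^ Suc (2 * N)) * ((1 + q ^ Suc N) * (1 - q ^ Suc N))"
    by (simp add: mult_ac)
  also have "\<dots> = qpoch q (2 * Suc N)"
    unfolding Suc.IH square by simp
  finally show ?case .
qed simp

lemma nonsquare_if_mod_3_eq_2: "m mod 3 = 2 \<Longrightarrow> int m \<noteq> k * k"
  using square_mod_3_neq_2[of k] by (metis of_nat_numeral zmod_int)

lemma overcubic_product_identity:
  "(\<Prod>j=1..N. overcubic_factor j) * (\<Prod>j=1..N. (1 - fps_X ^ (2 * (2 * j - 1))) * (1 + fps_X ^ (2 * j)))
     * (\<Prod>j=1..N. 1 - fps_X ^ (6 * j))
   = (\<Prod>j=1..N. (1 + fps_X ^ (2 * j - 1))\<^sup>2) * qpoch (fps_X\<^sup>2) N * (\<Prod>j=1..N. 1 + fps_X ^ (6 * j))"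
proof -
  have "(\<Prod>j=1..N. overcubic_factor j) * (\<Prod>j=1..N. (1 - fps_X ^ (2 * (2 * j - 1))) * (1 + fps_X ^ (2 * j)))
      * (\<Prod>j=1..N. 1 - fps_X ^ (6 * j))
      = (\<Prod>j=1..N. overcubic_factor j
          * ((1 - fps_X ^ (2 * (2 * j - 1))) * (1 + fps_X ^ (2 * j)) * (1 - fps_X ^ (6 * j))))"
    by (simp add: prod.distrib mult_ac)
  also have "\<dots> = (\<Prod>j=1..N. (1 + fps_X ^ (2 * j - 1))\<^sup>2 * (1 - fps_X ^ (2 * j)) * (1 + fps_X ^ (6 * j)))"
    by (intro prod.cong refl overcubic_factor_identity) simp
  also have "\<dots> = (\<Prod>j=1..N. (1 + fps_X ^ (2 * j - 1))\<^sup>2) * qpoch (fps_X\<^sup>2) N * (\<Prod>j=1..N. 1 + fps_X ^ (6 * j))"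
    by (simp add: qpoch_def power_mult prod.distrib)
  finally show ?thesis .
qed

lemma overcubic_product_nth_eq_0:
  assumes m: "m \<le> N" "m mod 3 = 2"
  shows "(\<Prod>j=1..N. overcubic_factor j) $ m = 0"
proof -
  define F where "F = (\<Prod>j=1..N. overcubic_factor j)"
  define E where "E = (\<Prod>j=1..N. (1 - fps_X ^ (2 * (2 * j - 1))) * (1 + fps_X ^ (2 * j)) :: complex fps)"
  define Q1 where "Q1 = (\<Prod>j=1..N. 1 - fps_X ^ (6 * j) :: complex fps)"
  define Q2 where "Q2 = (\<Prod>j=1..N. 1 + fps_X ^ (6 * j) :: complex fps)"
  define J where "J = (\<Prod>j=1..N. (1 + fps_X ^ (2 * j - 1))\<^sup>2 :: complex fps)"
  define P where "P = (qpoch (fps_X\<^sup>2) N :: complex fps)"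
  txt \<open>Below degree \<open>2 * N + 2\<close>, \<open>E * P\<close> agrees with \<open>P\<close>, so \<open>F * Q1\<close> agrees with
    \<open>J * P * Q2\<close>: a series supported on squares (up to degree \<open>2 * N\<close>) times a series in
    \<open>q ^ 3\<close>.\<close>
  have key: "F * E * Q1 = J * P * Q2"
    unfolding F_def E_def Q1_def J_def P_def Q2_def by (rule overcubic_product_identity)
  have "E * P = qpoch (fps_X\<^sup>2) (2 * N)"
    using qpoch_double[of "fps_X\<^sup>2" N] unfolding E_def P_def by (simp add: power_mult_distrib flip: power_mult)
  then have "fps_cutoff (2 * (N + 1)) (E * P) = fps_cutoff (2 * (N + 1)) P"
    unfolding P_def using fps_cutoff_qpoch[of N "2 * N" 2] by simp
  then have "fps_cutoff (2 * (N + 1)) (F * Q1 * P) = fps_cutoff (2 * (N + 1)) (F * Q1 * (E * P))"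
    by (intro fps_cutoff_mult_cong refl) simp
  also have "F * Q1 * (E * P) = (J * P * Q2) * P"
    using key by (simp add: mult_ac)
  finally have "fps_cutoff (2 * (N + 1)) (F * Q1) = fps_cutoff (2 * (N + 1)) (J * P * Q2)"
    by (rule fps_cutoff_mult_right_cancel) (simp add: P_def)
  then have FQ1_eq: "(F * Q1) $ i = (J * P * Q2) $ i" if "i \<le> N" for i
    using that unfolding fps_cutoff_eq_fps_cutoff_iff by simp
  have Q2: "fps_in_X_power 3 Q2" and Q1: "fps_in_X_power 3 Q1"
    unfolding Q1_def Q2_def by (auto intro!: fps_in_X_power_prod fps_in_X_power_one_plus_minus)
  have JP: "(J * P) $ i = 0" if "i \<le> 2 * N" "i mod 3 = 2" for i
    unfolding J_def P_def using that nonsquare_if_mod_3_eq_2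
    by (intro jacobi_product_qpoch_nth_nonsquare) auto
  have FQ1: "(F * Q1) $ i = 0" if "i \<le> N" "i mod 3 = 2" for i
  proof -
    have "i \<le> 2 * N"
      using that(1) by simp
    with Q2 JP show ?thesis
      unfolding FQ1_eq[OF that(1)] using that(2) by (rule fps_mult_nth_residue_eq_0)
  qed
  have "Q1 $ 0 \<noteq> 0"
    unfolding Q1_def fps_prod_nth_0 by (simp add: fps_X_power_nth)
  with Q1 show ?thesis
    unfolding F_def[symmetric] using FQ1 m by (rule fps_mult_nth_residue_eq_0_cancel)
qed

section \<open>Generating functions of overpartitions\<close>

definition overpartitions_in :: "nat set \<Rightarrow> nat \<Rightarrow> overpartition set" where
  "overpartitions_in A b = {p. is_overpartition b p \<and> set_mset (fst p) \<subseteq> A}"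

definition part_weight :: "(nat \<Rightarrow> 'a::comm_monoid_mult) \<Rightarrow> overpartition \<Rightarrow> 'a" where
  "part_weight c p = (\<Prod>x\<in>#fst p. c x)"

definition overpartition_gf :: "nat set \<Rightarrow> (nat \<Rightarrow> 'a::comm_ring_1) \<Rightarrow> 'a fps" where
  "overpartition_gf A c = Abs_fps (\<lambda>b. \<Sum>p\<in>overpartitions_in A b. part_weight c p)"

lemma size_le_sum_mset: "(\<forall>x\<in>#M. 0 < x) \<Longrightarrow> size M \<le> sum_mset (M :: nat multiset)"
  by (induction M) auto

lemma member_le_sum_mset: "x \<in># M \<Longrightarrow> x \<le> sum_mset (M :: nat multiset)"
  by (induction M) auto

lemma finite_overpartitions: "finite {p. is_overpartition b p}"
proof (rule finite_subset)
  show "{p. is_overpartition b p} \<subseteq> (\<Union>n\<le>b. multisets_of_size {1..b} n) \<times> Pow {1..b}"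
  proof
    fix p assume "p \<in> {p. is_overpartition b p}"
    then have p: "\<forall>x\<in>#fst p. 0 < x" "sum_mset (fst p) = b" "snd p \<subseteq> set_mset (fst p)"
      unfolding is_overpartition_def by auto
    have "set_mset (fst p) \<subseteq> {1..b}"
      using p member_le_sum_mset by fastforce
    moreover have "size (fst p) \<le> b"
      using size_le_sum_mset[OF p(1)] p(2) by simp
    ultimately show "p \<in> (\<Union>n\<le>b. multisets_of_size {1..b} n) \<times> Pow {1..b}"
      using p(3) by (cases p) (auto simp: multisets_of_size_def)
  qed
qed auto

lemma finite_overpartitions_in: "finite (overpartitions_in A b)"
  unfolding overpartitions_in_def by (rule finite_subset[OF _ finite_overpartitions]) auto

definition restrict_parts :: "nat set \<Rightarrow> overpartition \<Rightarrow> overpartition" where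
  "restrict_parts A p = (filter_mset (\<lambda>x. x \<in> A) (fst p), snd p \<inter> A)"

definition join_parts :: "overpartition \<Rightarrow> overpartition \<Rightarrow> overpartition" where
  "join_parts p q = (fst p + fst q, snd p \<union> snd q)"

lemma join_parts_in:
  "p \<in> overpartitions_in A i \<Longrightarrow> q \<in> overpartitions_in B j \<Longrightarrow> join_parts p q \<in> overpartitions_in (A \<union> B) (i + j)"
  by (auto simp: overpartitions_in_def is_overpartition_def join_parts_def)

lemma restrict_parts_in:
  "p \<in> overpartitions_in C b \<Longrightarrow> restrict_parts A p \<in> overpartitions_in A (sum_mset (fst (restrict_parts A p)))"
  by (auto simp: overpartitions_in_def is_overpartition_def restrict_parts_def)

lemma filter_mset_mem_eq:
  "set_mset M \<subseteq> A \<Longrightarrow> filter_mset (\<lambda>x. x \<in> A) M = M"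
  "set_mset M \<inter> A = {} \<Longrightarrow> filter_mset (\<lambda>x. x \<in> A) M = {#}"
  by (metis filter_mset_cong0 filter_mset_True subsetD, metis disjoint_iff filter_mset_cong0 filter_mset_False)

lemma restrict_join_parts:
  assumes "A \<inter> B = {}" "p \<in> overpartitions_in A i" "q \<in> overpartitions_in B j"
  shows "restrict_parts A (join_parts p q) = p" "restrict_parts B (join_parts p q) = q"
proof -
  have p: "set_mset (fst p) \<subseteq> A" "snd p \<subseteq> set_mset (fst p)"
    and q: "set_mset (fst q) \<subseteq> B" "snd q \<subseteq> set_mset (fst q)"
    using assms(2,3) by (auto simp: overpartitions_in_def is_overpartition_def)
  have "set_mset (fst q) \<inter> A = {}" "set_mset (fst p) \<inter> B = {}"
    using p q assms(1) by auto
  then show "restrict_parts A (join_parts p q) = p" "restrict_parts B (join_parts p q) = q"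
    using p q assms(1) unfolding restrict_parts_def join_parts_def
    by (auto simp: prod_eq_iff filter_mset_mem_eq)
qed

lemma join_restrict_parts:
  assumes "A \<inter> B = {}" "r \<in> overpartitions_in (A \<union> B) b"
  shows "join_parts (restrict_parts A r) (restrict_parts B r) = r"
proof -
  have r: "set_mset (fst r) \<subseteq> A \<union> B" "snd r \<subseteq> set_mset (fst r)"
    using assms(2) by (auto simp: overpartitions_in_def is_overpartition_def)
  have "filter_mset (\<lambda>x. x \<in> B) (fst r) = filter_mset (\<lambda>x. x \<notin> A) (fst r)"
    using r(1) assms(1) by (intro filter_mset_cong0) auto
  then show ?thesis
    using r assms(1) unfolding restrict_parts_def join_parts_def
    by (auto simp: prod_eq_iff)
qed

lemma part_weight_join_parts: "part_weight c (join_parts p q) = part_weight c p * part_weight c q"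
  by (simp add: part_weight_def join_parts_def)

lemma overpartition_gf_Un:
  assumes "A \<inter> B = {}"
  shows "overpartition_gf (A \<union> B) c = overpartition_gf A c * overpartition_gf B c"
proof (rule fps_ext)
  fix b
  let ?S = "SIGMA i:{0..b}. overpartitions_in A i \<times> overpartitions_in B (b - i)"
  have "(overpartition_gf A c * overpartition_gf B c) $ b
      = (\<Sum>(i, p, q)\<in>?S. part_weight c p * part_weight c q)"
    by (simp add: overpartition_gf_def fps_mult_nth sum_product sum.cartesian_product sum.Sigma
        finite_overpartitions_in case_prod_unfold)
  also have "\<dots> = (\<Sum>r\<in>overpartitions_in (A \<union> B) b. part_weight c r)"
  proof (rule sum.reindex_bij_witness[where j = "\<lambda>(i, p, q). join_parts p q"
      and i = "\<lambda>r. (sum_mset (fst (restrict_parts A r)), restrict_parts A r, restrict_parts B r)"])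
    fix x assume "x \<in> ?S"
    then obtain i p q where x: "x = (i, p, q)" "i \<le> b"
      and pq: "p \<in> overpartitions_in A i" "q \<in> overpartitions_in B (b - i)"
      by auto
    have "sum_mset (fst p) = i"
      using pq(1) by (simp add: overpartitions_in_def is_overpartition_def)
    then show "(sum_mset (fst (restrict_parts A ((\<lambda>(i, p, q). join_parts p q) x))),
        restrict_parts A ((\<lambda>(i, p, q). join_parts p q) x), restrict_parts B ((\<lambda>(i, p, q). join_parts p q) x)) = x"
      unfolding x(1) using restrict_join_parts[OF assms pq] by simp
    show "(\<lambda>(i, p, q). join_parts p q) x \<in> overpartitions_in (A \<union> B) b"
      unfolding x(1) using join_parts_in[OF pq] x(2) by simp
    show "part_weight c ((\<lambda>(i, p, q). join_parts p q) x) = (\<lambda>(i, p, q). part_weight c p * part_weight c q) x"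
      unfolding x(1) by (simp add: part_weight_join_parts)
  next
    fix r assume r: "r \<in> overpartitions_in (A \<union> B) b"
    show "(\<lambda>(i, p, q). join_parts p q) (sum_mset (fst (restrict_parts A r)), restrict_parts A r, restrict_parts B r) = r"
      using join_restrict_parts[OF assms r] by simp
    have "sum_mset (fst (restrict_parts A r)) + sum_mset (fst (restrict_parts B r)) = b"
      using arg_cong[OF join_restrict_parts[OF assms r], of "\<lambda>p. sum_mset (fst p)"] r
      by (simp add: join_parts_def overpartitions_in_def is_overpartition_def)
    then show "(sum_mset (fst (restrict_parts A r)), restrict_parts A r, restrict_parts B r) \<in> ?S"
      using restrict_parts_in[OF r, of A] restrict_parts_in[OF r, of B] by auto
  qed
  finally show "overpartition_gf (A \<union> B) c $ b = (overpartition_gf A c * overpartition_gf B c) $ b"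
    by (simp add: overpartition_gf_def)
qed

lemma overpartitions_in_singleton:
  assumes "0 < k"
  shows "overpartitions_in {k} n
       = (if k dvd n then (\<lambda>S. (replicate_mset (n div k) k, S)) ` Pow (if n = 0 then {} else {k}) else {})"
proof -
  have "p \<in> overpartitions_in {k} n \<longleftrightarrow>
      k dvd n \<and> fst p = replicate_mset (n div k) k \<and> snd p \<subseteq> (if n = 0 then {} else {k})" for p
  proof
    assume p: "p \<in> overpartitions_in {k} n"
    then have M: "fst p = replicate_mset (size (fst p)) k"
      by (intro set_mset_subset_singletonD) (simp add: overpartitions_in_def)
    moreover have "size (fst p) * k = n"
      using p arg_cong[OF M, of sum_mset] by (simp add: overpartitions_in_def is_overpartition_def)
    ultimately show "k dvd n \<and> fst p = replicate_mset (n div k) k \<and> snd p \<subseteq> (if n = 0 then {} else {k})"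
      using p assms by (auto simp: overpartitions_in_def is_overpartition_def)
  next
    assume "k dvd n \<and> fst p = replicate_mset (n div k) k \<and> snd p \<subseteq> (if n = 0 then {} else {k})"
    then show "p \<in> overpartitions_in {k} n"
      using assms by (auto simp: overpartitions_in_def is_overpartition_def split: if_splits)
  qed
  then show ?thesis
    by (auto simp: image_iff prod_eq_iff)
qed

lemma overpartition_gf_singleton:
  assumes "0 < k"
  shows "overpartition_gf {k} c = overpartition_series (c k) k"
proof (rule fps_ext)
  fix n
  have "part_weight c (replicate_mset m k, S) = c k ^ m" for m S
    by (simp add: part_weight_def)
  then show "overpartition_gf {k} c $ n = overpartition_series (c k) k $ n"
    unfolding overpartition_gf_def overpartitions_in_singleton[OF assms]
    by (simp add: overpartition_series_nth sum.reindex inj_on_def card_Pow part_weight_def)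
qed

lemma overpartition_gf_empty: "overpartition_gf {} c = 1"
proof -
  have "overpartitions_in {} b = (if b = 0 then {({#}, {})} else {})" for b
    by (auto simp: overpartitions_in_def is_overpartition_def)
  then show ?thesis
    by (simp add: fps_eq_iff overpartition_gf_def part_weight_def)
qed

lemma overpartition_gf_eq_prod:
  "finite A \<Longrightarrow> 0 \<notin> A \<Longrightarrow> overpartition_gf A c = (\<Prod>k\<in>A. overpartition_series (c k) k)"
proof (induction A rule: finite_induct)
  case (insert k A)
  then have "overpartition_gf ({k} \<union> A) c = overpartition_gf {k} c * overpartition_gf A c"
    by (intro overpartition_gf_Un) auto
  with insert show ?case
    by (simp add: overpartition_gf_singleton)
qed (simp add: overpartition_gf_empty)

lemma prod_atLeast1_atMost_double:
  fixes f :: "nat \<Rightarrow> 'a::comm_monoid_mult"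
  shows "(\<Prod>k=1..2 * N. f k) = (\<Prod>j=1..N. f (2 * j - 1) * f (2 * j))"
proof (induction N)
  case (Suc N)
  have "{1..2 * Suc N} = insert (Suc (Suc (2 * N))) (insert (Suc (2 * N)) {1..2 * N})"
    by auto
  then show ?case
    using Suc.IH by (simp add: mult_ac)
qed simp

lemma prod_even_atLeast1_atMost_double:
  fixes f :: "nat \<Rightarrow> 'a::comm_monoid_mult"
  shows "(\<Prod>k\<in>{k\<in>{1..2 * N}. even k}. f k) = (\<Prod>j=1..N. f (2 * j))"
proof -
  have "{k\<in>{1..2 * N}. even k} = (\<lambda>j. 2 * j) ` {1..N}"
    by (auto elim!: evenE)
  then show ?thesis
    by (simp add: prod.reindex inj_on_def)
qed

definition crank_exponent :: "overpartition \<times> overpartition \<Rightarrow> nat" where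
  "crank_exponent x = size (filter_mset even (fst (fst x))) + 2 * size (fst (snd x))"

lemma crank_mod_3: "crank x mod 3 = int (crank_exponent x mod 3)"
proof -
  have "int (crank_exponent x) = crank x + 3 * int (size (fst (snd x)))"
    by (simp add: crank_def crank_exponent_def opt_len_def even_parts_def)
  then have "int (crank_exponent x) mod 3 = crank x mod 3"
    by simp
  then show ?thesis
    by (simp add: of_nat_mod)
qed

lemma finite_overcubic: "finite (overcubic N)"
proof (rule finite_subset)
  show "overcubic N \<subseteq> (\<Union>a\<le>N. {p. is_overpartition a p}) \<times> (\<Union>a\<le>N. {p. is_overpartition a p})"
    unfolding overcubic_def by force
qed (simp add: finite_overpartitions)

lemma overcubic_slice:
  assumes "a \<le> N"
  shows "{x\<in>overcubic N. sum_mset (fst (fst x)) = a}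
       = overpartitions_in {1..2 * N} a \<times> overpartitions_in {k\<in>{1..2 * N}. even k} (N - a)"
proof
  show "{x\<in>overcubic N. sum_mset (fst (fst x)) = a}
      \<subseteq> overpartitions_in {1..2 * N} a \<times> overpartitions_in {k\<in>{1..2 * N}. even k} (N - a)"
  proof
    fix x assume x: "x \<in> {x\<in>overcubic N. sum_mset (fst (fst x)) = a}"
    obtain pr pb where pr_pb: "x = (pr, pb)"
      by (cases x)
    obtain b where ab: "a + b = N" "is_overpartition a pr" "is_overpartition b pb" "\<forall>y\<in>#fst pb. even y"
      using x unfolding pr_pb overcubic_def is_overpartition_def by auto
    have "set_mset (fst pr) \<subseteq> {1..2 * N}" "set_mset (fst pb) \<subseteq> {1..2 * N}"
      using ab member_le_sum_mset unfolding is_overpartition_def by fastforce+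
    then show "x \<in> overpartitions_in {1..2 * N} a \<times> overpartitions_in {k\<in>{1..2 * N}. even k} (N - a)"
      using ab unfolding pr_pb overpartitions_in_def by auto
  qed
  show "overpartitions_in {1..2 * N} a \<times> overpartitions_in {k\<in>{1..2 * N}. even k} (N - a)
      \<subseteq> {x\<in>overcubic N. sum_mset (fst (fst x)) = a}"
    using assms unfolding overpartitions_in_def overcubic_def is_overpartition_def by fastforce
qed

definition red_weight :: "nat \<Rightarrow> complex" where
  "red_weight k = (if even k then omega else 1)"

lemma omega_power_crank_exponent:
  "omega ^ crank_exponent x = part_weight red_weight (fst x) * part_weight (\<lambda>_. omega\<^sup>2) (snd x)"
proof -
  have "part_weight red_weight p = omega ^ size (filter_mset even (fst p))" for p
    unfolding part_weight_def by (induction "fst p" arbitrary: p) (auto simp: red_weight_def)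
  then show ?thesis
    by (simp add: crank_exponent_def part_weight_def power_add power_mult)
qed

lemma sum_omega_power_crank_exponent:
  "(\<Sum>x\<in>overcubic N. omega ^ crank_exponent x) = (\<Prod>j=1..N. overcubic_factor j) $ N"
proof -
  let ?A = "{1..2 * N}" and ?E = "{k\<in>{1..2 * N}. even k}"
  have "(\<Sum>x\<in>overcubic N. omega ^ crank_exponent x)
      = (\<Sum>a=0..N. \<Sum>x\<in>{x\<in>overcubic N. sum_mset (fst (fst x)) = a}. omega ^ crank_exponent x)"
    by (rule sum.group[symmetric, OF finite_overcubic]) (auto simp: overcubic_def is_overpartition_def)
  also have "\<dots> = (\<Sum>a=0..N. (\<Sum>p\<in>overpartitions_in ?A a. part_weight red_weight p)
      * (\<Sum>q\<in>overpartitions_in ?E (N - a). part_weight (\<lambda>_. omega\<^sup>2) q))"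
    by (intro sum.cong refl)
       (simp add: overcubic_slice omega_power_crank_exponent sum_product sum.cartesian_product case_prod_unfold)
  also have "\<dots> = (overpartition_gf ?A red_weight * overpartition_gf ?E (\<lambda>_. omega\<^sup>2)) $ N"
    by (simp add: fps_mult_nth overpartition_gf_def)
  also have "overpartition_gf ?A red_weight * overpartition_gf ?E (\<lambda>_. omega\<^sup>2) = (\<Prod>j=1..N. overcubic_factor j)"
  proof -
    have "overpartition_gf ?A red_weight = (\<Prod>k\<in>?A. overpartition_series (red_weight k) k)"
      by (rule overpartition_gf_eq_prod) auto
    also have "\<dots> = (\<Prod>j=1..N. overpartition_series 1 (2 * j - 1) * overpartition_series omega (2 * j))"
      unfolding prod_atLeast1_atMost_double by (intro prod.cong refl) (simp add: red_weight_def)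
    finally have red: "overpartition_gf ?A red_weight = \<dots>" .
    have "overpartition_gf ?E (\<lambda>_. omega\<^sup>2) = (\<Prod>k\<in>?E. overpartition_series (omega\<^sup>2) k)"
      by (rule overpartition_gf_eq_prod) auto
    then have blue: "overpartition_gf ?E (\<lambda>_. omega\<^sup>2) = (\<Prod>j=1..N. overpartition_series (omega\<^sup>2) (2 * j))"
      unfolding prod_even_atLeast1_atMost_double .
    show ?thesis
      unfolding red blue overcubic_factor_def by (simp add: prod.distrib)
  qed
  finally show ?thesis .
qed

section \<open>Counting by crank residue\<close>

lemma Cbar_eq_card:
  assumes "r < k"
  shows "Cbar (int r) k N = card {x\<in>overcubic N. crank x mod int k = int r}"
  using assms unfolding Cbar_def cong_def by simp

lemma abar_eq_sum_Cbar:
  assumes "0 < k"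
  shows "abar N = (\<Sum>r<k. Cbar (int r) k N)"
proof -
  have "abar N = (\<Sum>x\<in>overcubic N. 1)"
    by (simp add: abar_def)
  also have "\<dots> = (\<Sum>r<k. \<Sum>x\<in>{x\<in>overcubic N. nat (crank x mod int k) = r}. 1)"
    by (rule sum.group[symmetric, OF finite_overcubic]) (use assms in \<open>auto simp: nat_less_iff\<close>)
  also have "\<dots> = (\<Sum>r<k. Cbar (int r) k N)"
  proof (intro sum.cong refl)
    fix r assume "r \<in> {..<k}"
    moreover have "nat (crank x mod int k) = r \<longleftrightarrow> crank x mod int k = int r" for x
      using assms by auto
    ultimately show "(\<Sum>x\<in>{x\<in>overcubic N. nat (crank x mod int k) = r}. 1) = Cbar (int r) k N"
      by (simp add: Cbar_eq_card)
  qed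
  finally show ?thesis .
qed

lemma sum_omega_power_crank_exponent_eq_Cbar:
  "(\<Sum>x\<in>overcubic N. omega ^ crank_exponent x)
     = of_nat (Cbar 0 3 N) + of_nat (Cbar 1 3 N) * omega + of_nat (Cbar 2 3 N) * omega\<^sup>2"
proof -
  have "(\<Sum>x\<in>overcubic N. omega ^ crank_exponent x)
      = (\<Sum>r<3. \<Sum>x\<in>{x\<in>overcubic N. crank_exponent x mod 3 = r}. omega ^ crank_exponent x)"
    by (rule sum.group[symmetric, OF finite_overcubic]) auto
  also have "\<dots> = (\<Sum>r<3. of_nat (Cbar (int r) 3 N) * omega ^ r)"
  proof (intro sum.cong refl)
    fix r :: nat assume r: "r \<in> {..<3}"
    have "(\<Sum>x\<in>{x\<in>overcubic N. crank_exponent x mod 3 = r}. omega ^ crank_exponent x)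
        = (\<Sum>x\<in>{x\<in>overcubic N. crank_exponent x mod 3 = r}. omega ^ r)"
      by (intro sum.cong refl) (metis (mono_tags, lifting) mem_Collect_eq omega_power_mod_3)
    also have "\<dots> = of_nat (card {x\<in>overcubic N. crank x mod int 3 = int r}) * omega ^ r"
      by (simp add: crank_mod_3)
    also have "\<dots> = of_nat (Cbar (int r) 3 N) * omega ^ r"
      using r by (simp add: Cbar_eq_card)
    finally show "(\<Sum>x\<in>{x\<in>overcubic N. crank_exponent x mod 3 = r}. omega ^ crank_exponent x)
        = of_nat (Cbar (int r) 3 N) * omega ^ r" .
  qed
  also have "\<dots> = of_nat (Cbar 0 3 N) + of_nat (Cbar 1 3 N) * omega + of_nat (Cbar 2 3 N) * omega\<^sup>2"
    by (simp add: numeral_3_eq_3 lessThan_Suc power2_eq_square)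
  finally show ?thesis .
qed

lemma even_card_involution:
  assumes "finite S" and "\<And>x. x \<in> S \<Longrightarrow> h x \<in> S" and "\<And>x. x \<in> S \<Longrightarrow> h (h x) = x"
    and "\<And>x. x \<in> S \<Longrightarrow> P (h x) \<longleftrightarrow> \<not> P x"
  shows "even (card S)"
proof -
  have "bij_betw h {x\<in>S. P x} {x\<in>S. \<not> P x}"
    by (rule bij_betw_byWitness[where f' = h]) (use assms in auto)
  then have "card {x\<in>S. P x} = card {x\<in>S. \<not> P x}"
    by (rule bij_betw_same_card)
  moreover have "card S = card {x\<in>S. P x} + card {x\<in>S. \<not> P x}"
    using assms(1) by (subst card_Un_disjoint[symmetric]) (auto intro: arg_cong[where f = card])
  ultimately show ?thesis
    by simp
qed

definition largest_part_overlined :: "overpartition \<Rightarrow> bool" where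
  "largest_part_overlined p \<longleftrightarrow> Max (set_mset (fst p)) \<in> snd p"

definition toggle_largest_part :: "overpartition \<Rightarrow> overpartition" where
  "toggle_largest_part p =
     (let m = Max (set_mset (fst p)) in (fst p, if m \<in> snd p then snd p - {m} else insert m (snd p)))"

lemma fst_toggle_largest_part [simp]: "fst (toggle_largest_part p) = fst p"
  by (simp add: toggle_largest_part_def Let_def)

lemma toggle_largest_part_involutive: "toggle_largest_part (toggle_largest_part p) = p"
  by (cases p) (auto simp: toggle_largest_part_def Let_def)

lemma largest_part_overlined_toggle:
  "largest_part_overlined (toggle_largest_part p) \<longleftrightarrow> \<not> largest_part_overlined p"
  by (auto simp: toggle_largest_part_def largest_part_overlined_def Let_def)

lemma is_overpartition_toggle_largest_part:
  assumes "is_overpartition b p" and "fst p \<noteq> {#}"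
  shows "is_overpartition b (toggle_largest_part p)"
proof -
  have "Max (set_mset (fst p)) \<in># fst p"
    using assms(2) by (intro Max_in) auto
  then show ?thesis
    using assms(1) by (auto simp: is_overpartition_def toggle_largest_part_def Let_def)
qed

definition toggle_overcubic :: "overpartition \<times> overpartition \<Rightarrow> overpartition \<times> overpartition" where
  "toggle_overcubic x =
     (if fst (fst x) \<noteq> {#} then (toggle_largest_part (fst x), snd x) else (fst x, toggle_largest_part (snd x)))"

definition overcubic_flag :: "overpartition \<times> overpartition \<Rightarrow> bool" where
  "overcubic_flag x =
     (if fst (fst x) \<noteq> {#} then largest_part_overlined (fst x) else largest_part_overlined (snd x))"

lemma toggle_overcubic_in:
  assumes "0 < N" and "x \<in> overcubic N"
  shows "toggle_overcubic x \<in> overcubic N"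
proof -
  obtain pr pb a b where x: "x = (pr, pb)" "a + b = N" "is_overpartition a pr" "is_overpartition b pb"
    "\<forall>y\<in>#fst pb. even y"
    using assms(2) unfolding overcubic_def by auto
  have "fst pb \<noteq> {#}" if "fst pr = {#}"
    using that x assms(1) by (auto simp: is_overpartition_def)
  then show ?thesis
    using x unfolding overcubic_def toggle_overcubic_def
    by (auto intro: is_overpartition_toggle_largest_part)
qed

lemma even_Cbar:
  assumes "0 < N"
  shows "even (Cbar i k N)"
  unfolding Cbar_def
proof (rule even_card_involution[where h = toggle_overcubic and P = overcubic_flag])
  show "finite {x\<in>overcubic N. [crank x = i] (mod int k)}"
    by (simp add: finite_overcubic)
  have "crank (toggle_overcubic x) = crank x" for x
    by (simp add: crank_def toggle_overcubic_def toggle_largest_part_def even_parts_def opt_len_def Let_def)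
  then show "toggle_overcubic x \<in> {x\<in>overcubic N. [crank x = i] (mod int k)}"
    if "x \<in> {x\<in>overcubic N. [crank x = i] (mod int k)}" for x
    using that assms by (simp add: toggle_overcubic_in)
qed (auto simp: toggle_overcubic_def overcubic_flag_def toggle_largest_part_involutive
    largest_part_overlined_toggle)

theorem theorem3p2:
  fixes n :: nat
  shows "Cbar 0 3 (3*n+2) = Cbar 1 3 (3*n+2) \<and> Cbar 1 3 (3*n+2) = Cbar 2 3 (3*n+2)
         \<and> 3 * Cbar 2 3 (3*n+2) = abar (3*n+2) \<and> even (abar (3*n+2) div 3)"
proof -
  define N where "N = 3 * n + 2"
  have "(\<Prod>j=1..N. overcubic_factor j) $ N = 0"
    unfolding N_def by (rule overcubic_product_nth_eq_0) (simp, presburger)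
  then have "of_nat (Cbar 0 3 N) + of_nat (Cbar 1 3 N) * omega + of_nat (Cbar 2 3 N) * omega\<^sup>2 = 0"
    unfolding sum_omega_power_crank_exponent[symmetric] sum_omega_power_crank_exponent_eq_Cbar .
  then have "real (Cbar 0 3 N) = real (Cbar 1 3 N) \<and> real (Cbar 1 3 N) = real (Cbar 2 3 N)"
    by (intro omega_combination_eq_0) simp
  then have equal: "Cbar 0 3 N = Cbar 1 3 N" "Cbar 1 3 N = Cbar 2 3 N"
    by simp_all
  have "abar N = 3 * Cbar 2 3 N"
    using abar_eq_sum_Cbar[of 3 N] equal by (simp add: numeral_3_eq_3 lessThan_Suc)
  moreover have "even (Cbar 2 3 N)"
    by (rule even_Cbar) (simp add: N_def)
  ultimately show ?thesis
    using equal unfolding N_def[symmetric] by simp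
qed

end
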